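(* With $\varepsilon,N,q,P_{(0)},d$ as in the context, assume $0<1-4d^2<1$ and let $\eta>0$ satisfy $\tanh\eta=\sqrt{1-4d^2}$. For real $\theta$ set $$w(\theta)=\frac{\sinh(\eta-\theta)}{\sinh(\eta+\theta)}-1,\qquad \hat R(\theta)=I+w(\theta)P_{(0)}.$$ Then for all real $\theta,\theta'$ with $\eta+\theta,\eta+\theta',\eta+\theta+\theta'\neq0$, $$\hat R_{12}(\theta)\hat R_{23}(\theta+\theta')\hat R_{12}(\theta')=\hat R_{23}(\theta')\hat R_{12}(\theta+\theta')\hat R_{23}(\theta),$$ and $\hat R(\theta)\hat R(-\theta)=I$ whenever both sides are defined. Equivalently, $w$ satisfies $w(\theta+\theta')=\frac{w(\theta)+w(\theta')+w(\theta)w(\theta')}{1-d^2w(\theta)w(\theta')}$.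
   Context: Let $\varepsilon\in\{1,-1\}$, $N\ge 2$ (with $N=2n$ even if $\varepsilon=-1$), $q>0$, $[x]=(q^x-q^{-x})/(q-q^{-1})$ ($[x]=x$ if $q=1$). Define $\rho=(n-\tfrac12,\dots,\tfrac12,0,-\tfrac12,\dots,-n+\tfrac12)$ if $\varepsilon=1,N=2n+1$; $\rho=(n-1,\dots,1,0,0,-1,\dots,-n+1)$ if $\varepsilon=1,N=2n$; $\rho=(n,\dots,1,-1,\dots,-n)$ if $\varepsilon=-1,N=2n$. Let $\epsilon_i=1$ for all $i$ if $\varepsilon=1$; $\epsilon_i=1$ for $i\le n$ and $-1$ for $i>n$ if $\varepsilon=-1$. With $i'=N+1-i$ and matrix units $E_{ij}$, $P_{(0)}=(1+\varepsilon[N-\varepsilon])^{-1}\sum_{i,j}q^{\rho_i-\rho_j}\epsilon_i\epsilon_jE_{i',j}\otimes E_{i,j'}$ on $\mathbb C^N\otimes\mathbb C^N$; $1+\varepsilon[N-\varepsilon]\neq0$ is assumed and $d=(1+\varepsilon[N-\varepsilon])^{-1}$. $A_{12}=A\otimes I$, $A_{23}=I\otimes A$. *)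

theory Defs
  imports "HOL-Analysis.Analysis" "Jordan_Normal_Form.Matrix"
begin

definition qnum :: "real \<Rightarrow> real \<Rightarrow> real" where
  "qnum q x = (if q = 1 then x else (q powr x - q powr (-x)) / (q - q powr (-1)))"

text \<open>The vector rho, indexed by i = 1..N (eps = 1 or -1).\<close>
definition rho :: "int \<Rightarrow> nat \<Rightarrow> nat \<Rightarrow> real" where
  "rho eps N i =
    (let n = N div 2 in
     if eps = 1 \<and> odd N then
       (if i \<le> n then real n + 1/2 - real i
        else if i = n + 1 then 0
        else real n + 3/2 - real i)
     else if eps = 1 then
       (if i \<le> n then real n - real i else real n + 1 - real i)
     else
       (if i \<le> n then real n + 1 - real i else real n - real i))"

definition sgn_eps :: "int \<Rightarrow> nat \<Rightarrow> nat \<Rightarrow> real" where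
  "sgn_eps eps N i = (if eps = 1 then 1 else if i \<le> N div 2 then 1 else -1)"

definition prim :: "nat \<Rightarrow> nat \<Rightarrow> nat" where
  "prim N i = N + 1 - i"

text \<open>Matrix unit E_{ij} on C^N, with 1-based indices i, j in 1..N
  (basis vector e_k is stored at 0-based position k - 1).\<close>
definition matunit :: "nat \<Rightarrow> nat \<Rightarrow> nat \<Rightarrow> complex mat" where
  "matunit N i j = mat N N (\<lambda>(r, c). if r = i - 1 \<and> c = j - 1 then 1 else 0)"

text \<open>Kronecker (tensor) product of matrices; e_a (x) e_b is at position a * dim + b.\<close>
definition kron :: "complex mat \<Rightarrow> complex mat \<Rightarrow> complex mat" where
  "kron A B = mat (dim_row A * dim_row B) (dim_col A * dim_col B)
     (\<lambda>(i, j). A $$ (i div dim_row B, j div dim_col B) * B $$ (i mod dim_row B, j mod dim_col B))"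

definition dcoef :: "int \<Rightarrow> nat \<Rightarrow> real \<Rightarrow> real" where
  "dcoef eps N q = 1 / (1 + real_of_int eps * qnum q (real N - real_of_int eps))"

definition P0 :: "int \<Rightarrow> nat \<Rightarrow> real \<Rightarrow> complex mat" where
  "P0 eps N q = mat (N * N) (N * N) (\<lambda>rc.
     complex_of_real (dcoef eps N q) *
     (\<Sum>i\<in>{1..N}. \<Sum>j\<in>{1..N}.
        complex_of_real (q powr (rho eps N i - rho eps N j) * sgn_eps eps N i * sgn_eps eps N j)
        * kron (matunit N (prim N i) j) (matunit N i (prim N j)) $$ rc))"

definition wfun :: "real \<Rightarrow> real \<Rightarrow> real" where
  "wfun \<eta> \<theta> = sinh (\<eta> - \<theta>) / sinh (\<eta> + \<theta>) - 1"

definition Rhat :: "int \<Rightarrow> nat \<Rightarrow> real \<Rightarrow> real \<Rightarrow> real \<Rightarrow> complex mat" where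
  "Rhat eps N q \<eta> \<theta> = 1\<^sub>m (N * N) + complex_of_real (wfun \<eta> \<theta>) \<cdot>\<^sub>m P0 eps N q"

definition op12 :: "nat \<Rightarrow> complex mat \<Rightarrow> complex mat" where
  "op12 N A = kron A (1\<^sub>m N)"

definition op23 :: "nat \<Rightarrow> complex mat \<Rightarrow> complex mat" where
  "op23 N A = kron (1\<^sub>m N) A"

end

(*
  P_(0) = d |x><y| has rank one: x = sum_b q^(rho_(b+1)) eps_(b+1) e_(N-1-b) (x) e_b, and y is the
  antidiagonal vector with the reciprocal coefficients.  Since rho_(i') = -rho_i and eps_i eps_(i') = eps,
  y.x = eps * sum_i q^(-2 rho_i) = 1 + eps [N - eps] = 1/d, so P_(0) is idempotent.  As tensors, x and y
  are a cup and a cap obeying the snake identities; hence A = (P_(0))_12 and B = (P_(0))_23 are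
  idempotents with ABA = d^2 A and BAB = d^2 B.  For any such pair, expanding (1 + xA)(1 + yB)(1 + zA)
  reduces the Yang-Baxter equation for I + w P_(0) to the scalar relation
  w(t + t') (1 - d^2 w(t) w(t')) = w(t) + w(t') + w(t) w(t'), and unitarity to (1 + w(t))(1 + w(-t)) = 1.
  With X = e^(2 eta) and U = e^(2 t), w is the Moebius map U |-> (X + 1)(1 - U)/(XU - 1), and
  tanh eta = sqrt (1 - 4 d^2) says d^2 = X/(X + 1)^2, so the scalar relation becomes an identity of
  rational functions.
*)
theory Submission
  imports Defs
begin

lemma sum_lessThan_add:
  fixes m n :: nat
  shows "(\<Sum>k<m + n. h k) = (\<Sum>k<m. h k) + (\<Sum>k<n. h (m + k))"
  by (induction n) (simp_all add: add.assoc)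

lemma sum_lessThan_split_at:
  fixes m n :: nat
  shows "(\<Sum>k<m + Suc n. h k) = (\<Sum>k<m. h k) + h m + (\<Sum>k<n. h (m + Suc k))"
  by (simp only: sum_lessThan_add sum.lessThan_Suc_shift add_0_right add.assoc)

lemma sum_lessThan_mult:
  fixes m n :: nat
  shows "(\<Sum>k<m * n. h k) = (\<Sum>i<m. \<Sum>j<n. h (i * n + j))"
proof (induction m)
  case (Suc m)
  have "Suc m * n = m * n + n" by simp
  then show ?case by (simp only: sum_lessThan_add Suc.IH sum.lessThan_Suc)
qed simp

lemma mult_add_less: "s < m \<Longrightarrow> t < n \<Longrightarrow> s * n + t < m * (n :: nat)"
proof -
  assume "s < m" "t < n"
  then have "s * n + t < Suc s * n" by simp
  also have "\<dots> \<le> m * n" using \<open>s < m\<close> by (intro mult_le_mono1) simp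
  finally show ?thesis .
qed

lemma div_mod_less_mult: "i < m * n \<Longrightarrow> i div n < m \<and> i mod n < (n :: nat)"
  by (metis less_mult_imp_div_less mod_less_divisor mult_0_right neq0_conv not_less_zero)

section \<open>Kronecker products\<close>

lemma dim_kron [simp]:
  "dim_row (kron A B) = dim_row A * dim_row B"
  "dim_col (kron A B) = dim_col A * dim_col B"
  by (simp_all add: kron_def)

lemma index_kron [simp]:
  "i < dim_row A * dim_row B \<Longrightarrow> j < dim_col A * dim_col B \<Longrightarrow>
   kron A B $$ (i, j) = A $$ (i div dim_row B, j div dim_col B) * B $$ (i mod dim_row B, j mod dim_col B)"
  by (simp add: kron_def)

lemma kron_one_mat: "kron (1\<^sub>m m) (1\<^sub>m n) = 1\<^sub>m (m * n)"
proof (rule eq_matI)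
  fix i j assume "i < dim_row (1\<^sub>m (m * n))" "j < dim_col (1\<^sub>m (m * n))"
  then have "i < m * n" "j < m * n" by simp_all
  moreover have "(i div n = j div n \<and> i mod n = j mod n) \<longleftrightarrow> i = j"
    by (metis div_mult_mod_eq)
  ultimately show "kron (1\<^sub>m m) (1\<^sub>m n) $$ (i, j) = 1\<^sub>m (m * n) $$ (i, j)"
    using div_mod_less_mult[of i m n] div_mod_less_mult[of j m n] by auto
qed simp_all

lemma kron_add_left:
  assumes "A \<in> carrier_mat m n" "B \<in> carrier_mat m n"
  shows "kron (A + B) C = kron A C + kron B C"
proof (rule eq_matI)
  fix i j assume "i < dim_row (kron A C + kron B C)" "j < dim_col (kron A C + kron B C)"
  then have "i < m * dim_row C" "j < n * dim_col C" using assms by simp_all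
  then show "kron (A + B) C $$ (i, j) = (kron A C + kron B C) $$ (i, j)"
    using assms div_mod_less_mult[of i m "dim_row C"] div_mod_less_mult[of j n "dim_col C"]
    by (simp add: distrib_right)
qed (use assms in simp_all)

lemma kron_add_right:
  assumes "B \<in> carrier_mat m n" "C \<in> carrier_mat m n"
  shows "kron A (B + C) = kron A B + kron A C"
proof (rule eq_matI)
  fix i j assume "i < dim_row (kron A B + kron A C)" "j < dim_col (kron A B + kron A C)"
  then have "i < dim_row A * m" "j < dim_col A * n" using assms by simp_all
  then show "kron A (B + C) $$ (i, j) = (kron A B + kron A C) $$ (i, j)"
    using assms div_mod_less_mult[of i "dim_row A" m] div_mod_less_mult[of j "dim_col A" n]
    by (simp add: distrib_left)
qed (use assms in simp_all)

lemma kron_smult_left: "kron (a \<cdot>\<^sub>m A) B = a \<cdot>\<^sub>m kron A B"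
proof (rule eq_matI)
  fix i j assume "i < dim_row (a \<cdot>\<^sub>m kron A B)" "j < dim_col (a \<cdot>\<^sub>m kron A B)"
  then show "kron (a \<cdot>\<^sub>m A) B $$ (i, j) = (a \<cdot>\<^sub>m kron A B) $$ (i, j)"
    using div_mod_less_mult[of i "dim_row A" "dim_row B"] div_mod_less_mult[of j "dim_col A" "dim_col B"]
    by simp
qed simp_all

lemma kron_smult_right: "kron A (a \<cdot>\<^sub>m B) = a \<cdot>\<^sub>m kron A B"
proof (rule eq_matI)
  fix i j assume "i < dim_row (a \<cdot>\<^sub>m kron A B)" "j < dim_col (a \<cdot>\<^sub>m kron A B)"
  then show "kron A (a \<cdot>\<^sub>m B) $$ (i, j) = (a \<cdot>\<^sub>m kron A B) $$ (i, j)"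
    using div_mod_less_mult[of i "dim_row A" "dim_row B"] div_mod_less_mult[of j "dim_col A" "dim_col B"]
    by (simp add: mult.left_commute)
qed simp_all

lemma kron_mult:
  assumes AC: "dim_col A = dim_row C" and BD: "dim_col B = dim_row D"
  shows "kron A B * kron C D = kron (A * C) (B * D)"
proof (rule eq_matI)
  fix i j assume "i < dim_row (kron (A * C) (B * D))" "j < dim_col (kron (A * C) (B * D))"
  then have i: "i < dim_row A * dim_row B" and j: "j < dim_col C * dim_col D" by simp_all
  have "(kron A B * kron C D) $$ (i, j) = (\<Sum>k < dim_col A * dim_col B. kron A B $$ (i, k) * kron C D $$ (k, j))"
    using i j AC BD by (simp add: scalar_prod_def atLeast0LessThan)
  also have "\<dots> = (\<Sum>s < dim_col A. \<Sum>t < dim_col B.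
      kron A B $$ (i, s * dim_col B + t) * kron C D $$ (s * dim_col B + t, j))"
    by (rule sum_lessThan_mult)
  also have "\<dots> = (\<Sum>s < dim_col A. A $$ (i div dim_row B, s) * C $$ (s, j div dim_col D)) *
      (\<Sum>t < dim_col B. B $$ (i mod dim_row B, t) * D $$ (t, j mod dim_col D))"
    unfolding sum_product
  proof (intro sum.cong refl)
    fix s t assume "s \<in> {..<dim_col A}" and t: "t \<in> {..<dim_col B}"
    then have "s * dim_col B + t < dim_col A * dim_col B"
      by (simp add: mult_add_less)
    then show "kron A B $$ (i, s * dim_col B + t) * kron C D $$ (s * dim_col B + t, j) =
      A $$ (i div dim_row B, s) * C $$ (s, j div dim_col D) * (B $$ (i mod dim_row B, t) * D $$ (t, j mod dim_col D))"
      using i j AC BD t by (simp add: mult_ac)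
  qed
  also have "\<dots> = kron (A * C) (B * D) $$ (i, j)"
    using i j AC BD div_mod_less_mult[of i "dim_row A" "dim_row B"] div_mod_less_mult[of j "dim_col C" "dim_col D"]
    by (simp add: scalar_prod_def atLeast0LessThan)
  finally show "(kron A B * kron C D) $$ (i, j) = kron (A * C) (B * D) $$ (i, j)" .
qed simp_all

lemma op12_one_plus_smult:
  assumes "P \<in> carrier_mat (N * N) (N * N)"
  shows "op12 N (1\<^sub>m (N * N) + a \<cdot>\<^sub>m P) = 1\<^sub>m (N * N * N) + a \<cdot>\<^sub>m op12 N P"
  using assms by (simp add: op12_def kron_add_left[of _ "N * N" "N * N"] kron_smult_left kron_one_mat)

lemma op23_one_plus_smult:
  assumes "P \<in> carrier_mat (N * N) (N * N)"
  shows "op23 N (1\<^sub>m (N * N) + a \<cdot>\<^sub>m P) = 1\<^sub>m (N * N * N) + a \<cdot>\<^sub>m op23 N P"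
  using assms by (simp add: op23_def kron_add_right[of _ "N * N" "N * N"] kron_smult_right kron_one_mat mult.assoc)

lemma op12_carrier: "P \<in> carrier_mat (N * N) (N * N) \<Longrightarrow> op12 N P \<in> carrier_mat (N * N * N) (N * N * N)"
  unfolding op12_def by (intro carrier_matI) auto

lemma op23_carrier: "P \<in> carrier_mat (N * N) (N * N) \<Longrightarrow> op23 N P \<in> carrier_mat (N * N * N) (N * N * N)"
  unfolding op23_def by (intro carrier_matI) auto

lemma op12_idempotent:
  assumes "P \<in> carrier_mat (N * N) (N * N)" and "P * P = P"
  shows "op12 N P * op12 N P = op12 N P"
  using assms unfolding op12_def by (simp add: kron_mult)

lemma op23_idempotent:
  assumes "P \<in> carrier_mat (N * N) (N * N)" and "P * P = P"
  shows "op23 N P * op23 N P = op23 N P"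
  using assms unfolding op23_def by (simp add: kron_mult)

section \<open>Temperley-Lieb relations\<close>

text \<open>In the encoding of \<^const>\<open>kron\<close>, \<open>e\<^sub>r\<^sub>1 \<otimes> e\<^sub>r\<^sub>2 \<otimes> e\<^sub>r\<^sub>3\<close> sits at index
  \<open>(r1 * N + r2) * N + r3\<close>.\<close>

definition tensor3_mat :: "nat \<Rightarrow> (nat \<Rightarrow> nat \<Rightarrow> nat \<Rightarrow> nat \<Rightarrow> nat \<Rightarrow> nat \<Rightarrow> 'a) \<Rightarrow> 'a mat" where
  "tensor3_mat N f = mat (N * N * N) (N * N * N) (\<lambda>(r, c).
     f (r div N div N) (r div N mod N) (r mod N) (c div N div N) (c div N mod N) (c mod N))"

lemma dim_tensor3_mat [simp]:
  "dim_row (tensor3_mat N f) = N * N * N" "dim_col (tensor3_mat N f) = N * N * N"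
  by (simp_all add: tensor3_mat_def)

lemma index_tensor3_mat [simp]:
  "i < N * N * N \<Longrightarrow> j < N * N * N \<Longrightarrow> tensor3_mat N f $$ (i, j) =
     f (i div N div N) (i div N mod N) (i mod N) (j div N div N) (j div N mod N) (j mod N)"
  by (simp add: tensor3_mat_def)

lemma tensor3_index_less:
  "(i :: nat) < N * N * N \<Longrightarrow> i div N div N < N \<and> i div N mod N < N \<and> i mod N < N"
  using div_mod_less_mult[of i "N * N" N] div_mod_less_mult[of "i div N" N N] by auto

lemma tensor3_mat_cong:
  assumes "\<And>r1 r2 r3 c1 c2 c3. r1 < N \<Longrightarrow> r2 < N \<Longrightarrow> r3 < N \<Longrightarrow> c1 < N \<Longrightarrow> c2 < N \<Longrightarrow> c3 < N \<Longrightarrow>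
      f r1 r2 r3 c1 c2 c3 = g r1 r2 r3 c1 c2 c3"
  shows "tensor3_mat N f = tensor3_mat N g"
  by (rule eq_matI) (auto dest!: tensor3_index_less intro: assms)

lemma smult_tensor3_mat: "a \<cdot>\<^sub>m tensor3_mat N f = tensor3_mat N (\<lambda>r1 r2 r3 c1 c2 c3. a * f r1 r2 r3 c1 c2 c3)"
  by (rule eq_matI) auto

lemma tensor3_mat_mult:
  fixes f g :: "nat \<Rightarrow> nat \<Rightarrow> nat \<Rightarrow> nat \<Rightarrow> nat \<Rightarrow> nat \<Rightarrow> 'a :: semiring_0"
  shows "tensor3_mat N f * tensor3_mat N g = tensor3_mat N (\<lambda>r1 r2 r3 c1 c2 c3.
    \<Sum>s1<N. \<Sum>s2<N. \<Sum>s3<N. f r1 r2 r3 s1 s2 s3 * g s1 s2 s3 c1 c2 c3)" (is "_ = tensor3_mat N ?h")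
proof (rule eq_matI)
  fix i j assume "i < dim_row (tensor3_mat N ?h)" "j < dim_col (tensor3_mat N ?h)"
  then have i: "i < N * N * N" and j: "j < N * N * N" by simp_all
  have "(tensor3_mat N f * tensor3_mat N g) $$ (i, j) =
      (\<Sum>k < N * N * N. tensor3_mat N f $$ (i, k) * tensor3_mat N g $$ (k, j))"
    using i j by (simp add: scalar_prod_def atLeast0LessThan)
  also have "\<dots> = (\<Sum>s1<N. \<Sum>s2<N. \<Sum>s3<N. tensor3_mat N f $$ (i, (s1 * N + s2) * N + s3) *
      tensor3_mat N g $$ ((s1 * N + s2) * N + s3, j))"
    by (simp only: sum_lessThan_mult)
  also have "\<dots> = ?h (i div N div N) (i div N mod N) (i mod N) (j div N div N) (j div N mod N) (j mod N)"
  proof (intro sum.cong refl)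
    fix s1 s2 s3 assume "s1 \<in> {..<N}" "s2 \<in> {..<N}" "s3 \<in> {..<N}"
    then have "(s1 * N + s2) * N + s3 < N * N * N" and "s2 < N" "s3 < N"
      by (simp_all add: mult_add_less)
    then show "tensor3_mat N f $$ (i, (s1 * N + s2) * N + s3) * tensor3_mat N g $$ ((s1 * N + s2) * N + s3, j) =
      f (i div N div N) (i div N mod N) (i mod N) s1 s2 s3 * g s1 s2 s3 (j div N div N) (j div N mod N) (j mod N)"
      using i j by simp
  qed
  finally show "(tensor3_mat N f * tensor3_mat N g) $$ (i, j) = tensor3_mat N ?h $$ (i, j)"
    using i j by simp
qed simp_all

lemma sum3_delta_outer:
  fixes G :: "nat \<Rightarrow> 'a :: semiring_1"
  assumes "a < N" "b < N" and "\<And>s1 s2 s3. F s1 s2 s3 = of_bool (s1 = a) * (of_bool (s3 = b) * G s2)"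
  shows "(\<Sum>s1<N. \<Sum>s2<N. \<Sum>s3<N. F s1 s2 s3) = (\<Sum>s2<N. G s2)"
  using assms by (simp add: sum.swap[of _ "{..<N}" "{..<N}"] if_distrib cong: if_cong)

definition dyad_mat :: "nat \<Rightarrow> 'a :: times \<Rightarrow> (nat \<Rightarrow> nat \<Rightarrow> 'a) \<Rightarrow> (nat \<Rightarrow> nat \<Rightarrow> 'a) \<Rightarrow> 'a mat" where
  "dyad_mat N a X Y = mat (N * N) (N * N) (\<lambda>(r, c). a * X (r div N) (r mod N) * Y (c div N) (c mod N))"

lemma dim_dyad_mat [simp]:
  "dim_row (dyad_mat N a X Y) = N * N" "dim_col (dyad_mat N a X Y) = N * N"
  by (simp_all add: dyad_mat_def)

lemma index_dyad_mat [simp]: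
  "i < N * N \<Longrightarrow> j < N * N \<Longrightarrow> dyad_mat N a X Y $$ (i, j) = a * X (i div N) (i mod N) * Y (j div N) (j mod N)"
  by (simp add: dyad_mat_def)

lemma dyad_mat_mult_self:
  fixes X Y :: "nat \<Rightarrow> nat \<Rightarrow> 'a :: comm_semiring_1"
  shows "dyad_mat N a X Y * dyad_mat N a X Y = (a * (\<Sum>s<N. \<Sum>t<N. Y s t * X s t)) \<cdot>\<^sub>m dyad_mat N a X Y"
    (is "_ = ?k \<cdot>\<^sub>m _")
proof (rule eq_matI)
  fix i j assume "i < dim_row (?k \<cdot>\<^sub>m dyad_mat N a X Y)" "j < dim_col (?k \<cdot>\<^sub>m dyad_mat N a X Y)"
  then have i: "i < N * N" and j: "j < N * N" by simp_all
  have "(dyad_mat N a X Y * dyad_mat N a X Y) $$ (i, j) =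
      (\<Sum>k < N * N. dyad_mat N a X Y $$ (i, k) * dyad_mat N a X Y $$ (k, j))"
    using i j by (simp add: scalar_prod_def atLeast0LessThan)
  also have "\<dots> = (\<Sum>s<N. \<Sum>t<N. dyad_mat N a X Y $$ (i, s * N + t) * dyad_mat N a X Y $$ (s * N + t, j))"
    by (rule sum_lessThan_mult)
  also have "\<dots> = (\<Sum>s<N. \<Sum>t<N. (a * X (i div N) (i mod N) * Y (j div N) (j mod N)) * (a * (Y s t * X s t)))"
  proof (intro sum.cong refl)
    fix s t assume "s \<in> {..<N}" "t \<in> {..<N}"
    then have "s * N + t < N * N" "t < N" by (simp_all add: mult_add_less)
    then show "dyad_mat N a X Y $$ (i, s * N + t) * dyad_mat N a X Y $$ (s * N + t, j) =
        (a * X (i div N) (i mod N) * Y (j div N) (j mod N)) * (a * (Y s t * X s t))"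
      using i j by (simp add: mult_ac)
  qed
  also have "\<dots> = (?k \<cdot>\<^sub>m dyad_mat N a X Y) $$ (i, j)"
    using i j by (simp add: sum_distrib_left mult_ac)
  finally show "(dyad_mat N a X Y * dyad_mat N a X Y) $$ (i, j) = (?k \<cdot>\<^sub>m dyad_mat N a X Y) $$ (i, j)" .
qed simp_all

lemma op12_dyad_mat:
  "op12 N (dyad_mat N a X Y) = tensor3_mat N (\<lambda>r1 r2 r3 c1 c2 c3. a * X r1 r2 * Y c1 c2 * of_bool (r3 = c3))"
    (is "_ = tensor3_mat N ?h")
proof (rule eq_matI)
  fix i j assume "i < dim_row (tensor3_mat N ?h)" "j < dim_col (tensor3_mat N ?h)"
  then have i: "i < N * N * N" and j: "j < N * N * N" by simp_all
  then show "op12 N (dyad_mat N a X Y) $$ (i, j) = tensor3_mat N ?h $$ (i, j)"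
    using tensor3_index_less[OF i] tensor3_index_less[OF j]
      div_mod_less_mult[of i "N * N" N] div_mod_less_mult[of j "N * N" N]
    by (simp add: op12_def)
qed (simp_all add: op12_def)

lemma op23_dyad_mat:
  "op23 N (dyad_mat N a X Y) = tensor3_mat N (\<lambda>r1 r2 r3 c1 c2 c3. of_bool (r1 = c1) * (a * X r2 r3 * Y c2 c3))"
    (is "_ = tensor3_mat N ?h")
proof (rule eq_matI)
  fix i j assume "i < dim_row (tensor3_mat N ?h)" "j < dim_col (tensor3_mat N ?h)"
  then have i: "i < N * (N * N)" and j: "j < N * (N * N)" by (simp_all add: mult.assoc)
  then show "op23 N (dyad_mat N a X Y) $$ (i, j) = tensor3_mat N ?h $$ (i, j)"
    using div_mod_less_mult[of i N "N * N"] div_mod_less_mult[of j N "N * N"]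
    by (simp add: op23_def mult.assoc div_mult2_eq mod_mult2_eq)
qed (simp_all add: op23_def mult.assoc)

text \<open>Read as tensors, \<open>X\<close> is a cup and \<open>Y\<close> a cap; the assumptions are the two snake identities.\<close>

locale cup_cap =
  fixes N :: nat and X Y :: "nat \<Rightarrow> nat \<Rightarrow> complex"
  assumes snake_left: "r < N \<Longrightarrow> c < N \<Longrightarrow> (\<Sum>s<N. Y c s * X s r) = of_bool (r = c)"
    and snake_right: "r < N \<Longrightarrow> c < N \<Longrightarrow> (\<Sum>s<N. Y s c * X r s) = of_bool (r = c)"
begin

lemma op12_op23_dyad_mat:
  "op12 N (dyad_mat N a X Y) * op23 N (dyad_mat N a X Y) =
    tensor3_mat N (\<lambda>r1 r2 r3 c1 c2 c3. a\<^sup>2 * X r1 r2 * Y c2 c3 * of_bool (r3 = c1))"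
  unfolding op12_dyad_mat op23_dyad_mat tensor3_mat_mult
proof (rule tensor3_mat_cong)
  fix r1 r2 r3 c1 c2 c3 assume "r1 < N" "r2 < N" "r3 < N" "c1 < N" "c2 < N" "c3 < N"
  have "(\<Sum>s1<N. \<Sum>s2<N. \<Sum>s3<N. a * X r1 r2 * Y s1 s2 * of_bool (r3 = s3) *
      (of_bool (s1 = c1) * (a * X s2 s3 * Y c2 c3))) = (\<Sum>s2<N. a\<^sup>2 * X r1 r2 * Y c2 c3 * (Y c1 s2 * X s2 r3))"
    (is "?lhs = _")
    by (rule sum3_delta_outer[OF \<open>c1 < N\<close> \<open>r3 < N\<close>]) (auto simp: power2_eq_square mult_ac)
  also have "\<dots> = a\<^sup>2 * X r1 r2 * Y c2 c3 * of_bool (r3 = c1)"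
    by (simp add: sum_distrib_left[symmetric] snake_left \<open>r3 < N\<close> \<open>c1 < N\<close>)
  finally show "?lhs = a\<^sup>2 * X r1 r2 * Y c2 c3 * of_bool (r3 = c1)" .
qed

lemma op23_op12_dyad_mat:
  "op23 N (dyad_mat N a X Y) * op12 N (dyad_mat N a X Y) =
    tensor3_mat N (\<lambda>r1 r2 r3 c1 c2 c3. a\<^sup>2 * X r2 r3 * Y c1 c2 * of_bool (r1 = c3))"
  unfolding op12_dyad_mat op23_dyad_mat tensor3_mat_mult
proof (rule tensor3_mat_cong)
  fix r1 r2 r3 c1 c2 c3 assume "r1 < N" "r2 < N" "r3 < N" "c1 < N" "c2 < N" "c3 < N"
  have "(\<Sum>s1<N. \<Sum>s2<N. \<Sum>s3<N. of_bool (r1 = s1) * (a * X r2 r3 * Y s2 s3) *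
      (a * X s1 s2 * Y c1 c2 * of_bool (s3 = c3))) = (\<Sum>s2<N. a\<^sup>2 * X r2 r3 * Y c1 c2 * (Y s2 c3 * X r1 s2))"
    (is "?lhs = _")
    by (rule sum3_delta_outer[OF \<open>r1 < N\<close> \<open>c3 < N\<close>]) (auto simp: power2_eq_square mult_ac)
  also have "\<dots> = a\<^sup>2 * X r2 r3 * Y c1 c2 * of_bool (r1 = c3)"
    by (simp add: sum_distrib_left[symmetric] snake_right \<open>r1 < N\<close> \<open>c3 < N\<close>)
  finally show "?lhs = a\<^sup>2 * X r2 r3 * Y c1 c2 * of_bool (r1 = c3)" .
qed

lemma temperley_lieb_12:
  "op12 N (dyad_mat N a X Y) * op23 N (dyad_mat N a X Y) * op12 N (dyad_mat N a X Y) =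
    a\<^sup>2 \<cdot>\<^sub>m op12 N (dyad_mat N a X Y)"
  unfolding op12_op23_dyad_mat unfolding op12_dyad_mat tensor3_mat_mult smult_tensor3_mat
proof (rule tensor3_mat_cong)
  fix r1 r2 r3 c1 c2 c3 assume "r1 < N" "r2 < N" "r3 < N" "c1 < N" "c2 < N" "c3 < N"
  have "(\<Sum>s1<N. \<Sum>s2<N. \<Sum>s3<N. a\<^sup>2 * X r1 r2 * Y s2 s3 * of_bool (r3 = s1) *
      (a * X s1 s2 * Y c1 c2 * of_bool (s3 = c3))) = (\<Sum>s2<N. a\<^sup>2 * (a * X r1 r2 * Y c1 c2) * (Y s2 c3 * X r3 s2))"
    (is "?lhs = _")
    by (rule sum3_delta_outer[OF \<open>r3 < N\<close> \<open>c3 < N\<close>]) (auto simp: mult_ac)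
  also have "\<dots> = a\<^sup>2 * (a * X r1 r2 * Y c1 c2 * of_bool (r3 = c3))"
    by (simp add: sum_distrib_left[symmetric] snake_right \<open>r3 < N\<close> \<open>c3 < N\<close>)
  finally show "?lhs = a\<^sup>2 * (a * X r1 r2 * Y c1 c2 * of_bool (r3 = c3))" .
qed

lemma temperley_lieb_23:
  "op23 N (dyad_mat N a X Y) * op12 N (dyad_mat N a X Y) * op23 N (dyad_mat N a X Y) =
    a\<^sup>2 \<cdot>\<^sub>m op23 N (dyad_mat N a X Y)"
  unfolding op23_op12_dyad_mat unfolding op23_dyad_mat tensor3_mat_mult smult_tensor3_mat
proof (rule tensor3_mat_cong)
  fix r1 r2 r3 c1 c2 c3 assume "r1 < N" "r2 < N" "r3 < N" "c1 < N" "c2 < N" "c3 < N"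
  have "(\<Sum>s1<N. \<Sum>s2<N. \<Sum>s3<N. a\<^sup>2 * X r2 r3 * Y s1 s2 * of_bool (r1 = s3) *
      (of_bool (s1 = c1) * (a * X s2 s3 * Y c2 c3))) = (\<Sum>s2<N. a\<^sup>2 * (a * X r2 r3 * Y c2 c3) * (Y c1 s2 * X s2 r1))"
    (is "?lhs = _")
    by (rule sum3_delta_outer[OF \<open>c1 < N\<close> \<open>r1 < N\<close>]) (auto simp: mult_ac)
  also have "\<dots> = a\<^sup>2 * (of_bool (r1 = c1) * (a * X r2 r3 * Y c2 c3))"
    by (simp add: sum_distrib_left[symmetric] snake_left \<open>r1 < N\<close> \<open>c1 < N\<close>)
  finally show "?lhs = a\<^sup>2 * (of_bool (r1 = c1) * (a * X r2 r3 * Y c2 c3))" .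
qed

end

section \<open>Baxterisation\<close>

lemma baxterised_triple_product:
  fixes A B :: "'a :: comm_ring_1 mat"
  assumes A: "A \<in> carrier_mat n n" and B: "B \<in> carrier_mat n n"
    and AA: "A * A = A" and ABA: "A * B * A = k \<cdot>\<^sub>m A"
  shows "(1\<^sub>m n + x \<cdot>\<^sub>m A) * (1\<^sub>m n + y \<cdot>\<^sub>m B) * (1\<^sub>m n + z \<cdot>\<^sub>m A) =
    1\<^sub>m n + (x + z + x * z + k * x * y * z) \<cdot>\<^sub>m A + y \<cdot>\<^sub>m B + (x * y) \<cdot>\<^sub>m (A * B) + (y * z) \<cdot>\<^sub>m (B * A)"
proof -
  note distrib = add_mult_distrib_mat[where nr = n and n = n and nc = n]
    mult_add_distrib_mat[where nr = n and n = n and nc = n]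
    mult_smult_assoc_mat[where nr = n and n = n and nc = n]
    mult_smult_distrib[where nr = n and n = n and nc = n]
  have AB: "A * B \<in> carrier_mat n n" and BA: "B * A \<in> carrier_mat n n" using A B by auto
  have ABA': "A * (B * A) = k \<cdot>\<^sub>m A" using A B ABA by simp
  have "(1\<^sub>m n + x \<cdot>\<^sub>m A) * (1\<^sub>m n + y \<cdot>\<^sub>m B) * (1\<^sub>m n + z \<cdot>\<^sub>m A) =
    1\<^sub>m n + x \<cdot>\<^sub>m A + y \<cdot>\<^sub>m (B + x \<cdot>\<^sub>m (A * B)) + z \<cdot>\<^sub>m (A + (x \<cdot>\<^sub>m A + y \<cdot>\<^sub>m (B * A + x \<cdot>\<^sub>m (k \<cdot>\<^sub>m A))))"
    using A B by (simp add: distrib AA ABA')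
  also have "\<dots> = 1\<^sub>m n + (x + z + x * z + k * x * y * z) \<cdot>\<^sub>m A + y \<cdot>\<^sub>m B + (x * y) \<cdot>\<^sub>m (A * B) + (y * z) \<cdot>\<^sub>m (B * A)"
    by (rule eq_matI) (use A B AB BA in \<open>auto simp: algebra_simps\<close>)
  finally show ?thesis .
qed

lemma baxterised_yang_baxter:
  fixes A B :: "'a :: comm_ring_1 mat"
  assumes A: "A \<in> carrier_mat n n" and B: "B \<in> carrier_mat n n"
    and AA: "A * A = A" and BB: "B * B = B"
    and ABA: "A * B * A = k \<cdot>\<^sub>m A" and BAB: "B * A * B = k \<cdot>\<^sub>m B"
    and rel: "y * (1 - k * x * z) = x + z + x * z"
  shows "(1\<^sub>m n + x \<cdot>\<^sub>m A) * (1\<^sub>m n + y \<cdot>\<^sub>m B) * (1\<^sub>m n + z \<cdot>\<^sub>m A) =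
    (1\<^sub>m n + z \<cdot>\<^sub>m B) * (1\<^sub>m n + y \<cdot>\<^sub>m A) * (1\<^sub>m n + x \<cdot>\<^sub>m B)"
proof -
  have "x + z + x * z + k * x * y * z = y" "z + x + z * x + k * z * y * x = y"
    using rel by (simp_all add: algebra_simps)
  then show ?thesis
    unfolding baxterised_triple_product[OF A B AA ABA] baxterised_triple_product[OF B A BB BAB]
    by (intro eq_matI) (use A B in \<open>auto simp: algebra_simps\<close>)
qed

lemma baxterised_inverse:
  fixes A :: "'a :: comm_ring_1 mat"
  assumes A: "A \<in> carrier_mat n n" and AA: "A * A = A" and rel: "x + y + x * y = 0"
  shows "(1\<^sub>m n + x \<cdot>\<^sub>m A) * (1\<^sub>m n + y \<cdot>\<^sub>m A) = 1\<^sub>m n"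
proof -
  have "(1\<^sub>m n + x \<cdot>\<^sub>m A) * (1\<^sub>m n + y \<cdot>\<^sub>m A) = 1\<^sub>m n + x \<cdot>\<^sub>m A + y \<cdot>\<^sub>m (A + x \<cdot>\<^sub>m A)"
    using A by (simp add: add_mult_distrib_mat[where nr = n and n = n and nc = n]
        mult_add_distrib_mat[where nr = n and n = n and nc = n]
        mult_smult_assoc_mat[where nr = n and n = n and nc = n]
        mult_smult_distrib[where nr = n and n = n and nc = n] AA)
  also have "\<dots> = 1\<^sub>m n + (x + y + x * y) \<cdot>\<^sub>m A"
    by (rule eq_matI) (use A in \<open>auto simp: algebra_simps\<close>)
  finally show ?thesis
    using A rel by (auto intro!: eq_matI)
qed

section \<open>The loop value\<close>

lemma qnum_of_nat_sum:
  assumes q: "q > 0"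
  shows "qnum q (real m) = (\<Sum>k<m. q powr (2 * real k + 1 - real m))"
proof (cases "q = 1")
  case True
  then show ?thesis by (simp add: qnum_def)
next
  case False
  define f where "f k = q powr (2 * real k - real m)" for k
  have step: "(q - q powr -1) * q powr (2 * real k + 1 - real m) = f (Suc k) - f k" for k
  proof -
    have "(q - q powr -1) * q powr (2 * real k + 1 - real m) =
        q powr 1 * q powr (2 * real k + 1 - real m) - q powr -1 * q powr (2 * real k + 1 - real m)"
      using q by (simp add: left_diff_distrib)
    also have "\<dots> = f (Suc k) - f k"
      unfolding f_def powr_add[symmetric] by (simp add: algebra_simps)
    finally show ?thesis .
  qed
  have "q - q powr -1 = (q - 1) * (q + 1) / q"
    using q by (simp add: powr_minus field_simps)
  then have "q - q powr -1 \<noteq> 0"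
    using q False by simp
  moreover have "(q - q powr -1) * (\<Sum>k<m. q powr (2 * real k + 1 - real m)) = q powr real m - q powr (- real m)"
    unfolding sum_distrib_left step sum_lessThan_telescope by (simp add: f_def)
  ultimately show ?thesis
    using False by (simp add: qnum_def field_simps)
qed

lemma sum_rho_odd_orthogonal:
  assumes q: "q > 0" and N: "N = 2 * n + 1"
  shows "(\<Sum>s<N. q powr (- 2 * rho 1 N (s + 1))) = 1 + qnum q (real N - 1)"
proof -
  have "qnum q (real N - 1) = (\<Sum>k<n + n. q powr (2 * real k + 1 - real (n + n)))"
    using qnum_of_nat_sum[OF q, of "n + n"] N by simp
  also have "\<dots> = (\<Sum>k<n. q powr (2 * real k + 1 - 2 * real n)) + (\<Sum>k<n. q powr (2 * real k + 1))"
    by (simp add: sum_lessThan_add algebra_simps)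
  finally have qn: "qnum q (real N - 1) = \<dots>" .
  have "{..<N} = {..<n + Suc n}" using N by auto
  then have "(\<Sum>s<N. q powr (- 2 * rho 1 N (s + 1))) = (\<Sum>s<n. q powr (- 2 * rho 1 N (s + 1)))
      + q powr (- 2 * rho 1 N (n + 1)) + (\<Sum>k<n. q powr (- 2 * rho 1 N (n + Suc k + 1)))"
    by (simp only: sum_lessThan_split_at)
  also have "(\<Sum>s<n. q powr (- 2 * rho 1 N (s + 1))) = (\<Sum>k<n. q powr (2 * real k + 1 - 2 * real n))"
    by (intro sum.cong refl) (simp add: rho_def N algebra_simps)
  also have "q powr (- 2 * rho 1 N (n + 1)) = 1"
    using q by (simp add: rho_def N)
  also have "(\<Sum>k<n. q powr (- 2 * rho 1 N (n + Suc k + 1))) = (\<Sum>k<n. q powr (2 * real k + 1))"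
    by (intro sum.cong refl) (simp add: rho_def N algebra_simps)
  finally show ?thesis unfolding qn by simp
qed

lemma sum_rho_even_orthogonal:
  assumes q: "q > 0" and N: "N = 2 * m + 2"
  shows "(\<Sum>s<N. q powr (- 2 * rho 1 N (s + 1))) = 1 + qnum q (real N - 1)"
proof -
  have "qnum q (real N - 1) = (\<Sum>k<m + Suc m. q powr (2 * real k - 2 * real m))"
    using qnum_of_nat_sum[OF q, of "m + Suc m"] N by (simp add: algebra_simps)
  also have "\<dots> = (\<Sum>k<Suc m. q powr (2 * real k - 2 * real m)) + (\<Sum>k<m. q powr (2 * real k + 2))"
    unfolding sum_lessThan_split_at using q by (simp add: algebra_simps)
  finally have qn: "qnum q (real N - 1) = \<dots>" .
  have "{..<N} = {..<Suc m + Suc m}" using N by auto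
  then have "(\<Sum>s<N. q powr (- 2 * rho 1 N (s + 1))) = (\<Sum>s<Suc m. q powr (- 2 * rho 1 N (s + 1)))
      + q powr (- 2 * rho 1 N (Suc m + 1)) + (\<Sum>k<m. q powr (- 2 * rho 1 N (Suc m + Suc k + 1)))"
    by (simp only: sum_lessThan_split_at)
  also have "(\<Sum>s<Suc m. q powr (- 2 * rho 1 N (s + 1))) = (\<Sum>k<Suc m. q powr (2 * real k - 2 * real m))"
    by (intro sum.cong refl) (simp add: rho_def N algebra_simps)
  also have "q powr (- 2 * rho 1 N (Suc m + 1)) = 1"
    using q by (simp add: rho_def N)
  also have "(\<Sum>k<m. q powr (- 2 * rho 1 N (Suc m + Suc k + 1))) = (\<Sum>k<m. q powr (2 * real k + 2))"
    by (intro sum.cong refl) (simp add: rho_def N algebra_simps)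
  finally show ?thesis unfolding qn by simp
qed

lemma sum_rho_symplectic:
  assumes q: "q > 0" and N: "N = 2 * n"
  shows "(\<Sum>s<N. q powr (- 2 * rho (-1) N (s + 1))) = qnum q (real N + 1) - 1"
proof -
  have "qnum q (real N + 1) = (\<Sum>k<n + Suc n. q powr (2 * real k - 2 * real n))"
    using qnum_of_nat_sum[OF q, of "n + Suc n"] N by (simp add: algebra_simps)
  also have "\<dots> = (\<Sum>k<n. q powr (2 * real k - 2 * real n)) + 1 + (\<Sum>k<n. q powr (2 * real k + 2))"
    unfolding sum_lessThan_split_at using q by (simp add: algebra_simps)
  finally have qn: "qnum q (real N + 1) = \<dots>" .
  have "{..<N} = {..<n + n}" using N by auto
  then have "(\<Sum>s<N. q powr (- 2 * rho (-1) N (s + 1))) =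
      (\<Sum>s<n. q powr (- 2 * rho (-1) N (s + 1))) + (\<Sum>k<n. q powr (- 2 * rho (-1) N (n + k + 1)))"
    by (simp only: sum_lessThan_add)
  also have "(\<Sum>s<n. q powr (- 2 * rho (-1) N (s + 1))) = (\<Sum>k<n. q powr (2 * real k - 2 * real n))"
    by (intro sum.cong refl) (simp add: rho_def N algebra_simps)
  also have "(\<Sum>k<n. q powr (- 2 * rho (-1) N (n + k + 1))) = (\<Sum>k<n. q powr (2 * real k + 2))"
    by (intro sum.cong refl) (simp add: rho_def N algebra_simps)
  finally show ?thesis unfolding qn by simp
qed

definition rho_weight :: "int \<Rightarrow> nat \<Rightarrow> real \<Rightarrow> nat \<Rightarrow> real" where
  "rho_weight eps N q i = q powr rho eps N i * sgn_eps eps N i"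

lemma rho_weight_nonzero: "q > 0 \<Longrightarrow> rho_weight eps N q i \<noteq> 0"
  by (simp add: rho_weight_def sgn_eps_def)

lemma rho_weight_divide:
  "q > 0 \<Longrightarrow> rho_weight eps N q i / rho_weight eps N q j =
    q powr (rho eps N i - rho eps N j) * sgn_eps eps N i * sgn_eps eps N j"
  by (simp add: rho_weight_def sgn_eps_def powr_diff)

locale orthosymplectic =
  fixes eps :: int and N :: nat
  assumes eps_cases: "eps = 1 \<or> eps = -1" and symplectic_even: "eps = -1 \<Longrightarrow> even N"
begin

lemma rho_reflect:
  assumes i: "i \<in> {1..N}"
  shows "rho eps N (prim N i) = - rho eps N i"
proof (cases "even N")
  case True
  then obtain n where "N = 2 * n" by blast
  with eps_cases i show ?thesis by (auto simp: rho_def prim_def of_nat_diff)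
next
  case False
  then obtain n where "N = 2 * n + 1" by (blast elim: oddE)
  with eps_cases i symplectic_even False show ?thesis by (auto simp: rho_def prim_def of_nat_diff)
qed

lemma sgn_eps_reflect:
  "i \<in> {1..N} \<Longrightarrow> sgn_eps eps N (prim N i) = real_of_int eps * sgn_eps eps N i"
  using eps_cases symplectic_even by (auto simp: sgn_eps_def prim_def elim!: evenE)

lemma rho_weight_reflect:
  assumes q: "q > 0" and i: "i \<in> {1..N}"
  shows "rho_weight eps N q (prim N i) = real_of_int eps * q powr (- 2 * rho eps N i) * rho_weight eps N q i"
proof -
  have "q powr (- rho eps N i) = q powr (- 2 * rho eps N i) * q powr rho eps N i"
    by (simp add: powr_add[symmetric])
  then show ?thesis
    by (simp add: rho_weight_def rho_reflect[OF i] sgn_eps_reflect[OF i] mult_ac)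
qed

lemma sum_rho_loop_value:
  assumes q: "q > 0" and N: "N > 0"
  shows "(\<Sum>s<N. real_of_int eps * q powr (- 2 * rho eps N (s + 1))) =
    1 + real_of_int eps * qnum q (real N - real_of_int eps)"
proof (cases "eps = 1")
  case True
  show ?thesis
  proof (cases "even N")
    case True
    then obtain k where "N = 2 * k" by blast
    with N have "N = 2 * (k - 1) + 2" by simp
    then show ?thesis using sum_rho_even_orthogonal[OF q] \<open>eps = 1\<close> by simp
  next
    case False
    then obtain n where "N = 2 * n + 1" by (blast elim: oddE)
    then show ?thesis using sum_rho_odd_orthogonal[OF q] \<open>eps = 1\<close> by simp
  qed
next
  case False
  then have "eps = -1" using eps_cases by simp
  then obtain n where "N = 2 * n" using symplectic_even by blast
  then show ?thesis using sum_rho_symplectic[OF q] \<open>eps = -1\<close> by (simp add: sum_negf)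
qed

lemma sum_rho_weight_reflect_ratio:
  assumes q: "q > 0" and N: "N > 0"
  shows "(\<Sum>s<N. rho_weight eps N q (N - s) / rho_weight eps N q (s + 1)) =
    1 + real_of_int eps * qnum q (real N - real_of_int eps)"
proof -
  have "rho_weight eps N q (N - s) / rho_weight eps N q (s + 1) = real_of_int eps * q powr (- 2 * rho eps N (s + 1))"
    if "s < N" for s
  proof -
    have "prim N (s + 1) = N - s" by (simp add: prim_def)
    then show ?thesis
      using rho_weight_reflect[OF q, of "s + 1"] rho_weight_nonzero[OF q, of eps N "s + 1"] that by simp
  qed
  then show ?thesis
    using sum_rho_loop_value[OF q N] by simp
qed

end

section \<open>The operator P0\<close>

definition antidiag_cup :: "nat \<Rightarrow> (nat \<Rightarrow> complex) \<Rightarrow> nat \<Rightarrow> nat \<Rightarrow> complex" where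
  "antidiag_cup N w a b = of_bool (a + b = N - 1) * w b"

definition antidiag_cap :: "nat \<Rightarrow> (nat \<Rightarrow> complex) \<Rightarrow> nat \<Rightarrow> nat \<Rightarrow> complex" where
  "antidiag_cap N w a b = of_bool (a + b = N - 1) / w a"

lemma cup_cap_antidiag:
  assumes w: "\<And>k. k < N \<Longrightarrow> w k \<noteq> 0"
  shows "cup_cap N (antidiag_cup N w) (antidiag_cap N w)"
proof
  fix r c assume r: "r < N" and c: "c < N"
  have "(\<Sum>s<N. antidiag_cap N w c s * antidiag_cup N w s r) =
      (\<Sum>s<N. if s = N - 1 - c then of_bool (r = c) * (w r / w c) else 0)"
    using r c by (intro sum.cong refl) (auto simp: antidiag_cup_def antidiag_cap_def)
  also have "\<dots> = of_bool (r = c)"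
    using c w by simp
  finally show "(\<Sum>s<N. antidiag_cap N w c s * antidiag_cup N w s r) = of_bool (r = c)" .
  have "(\<Sum>s<N. antidiag_cap N w s c * antidiag_cup N w r s) =
      (\<Sum>s<N. if s = N - 1 - c then of_bool (r = c) else 0)"
    using r c w by (intro sum.cong refl) (auto simp: antidiag_cup_def antidiag_cap_def)
  also have "\<dots> = of_bool (r = c)"
    using c by simp
  finally show "(\<Sum>s<N. antidiag_cap N w s c * antidiag_cup N w r s) = of_bool (r = c)" .
qed

lemma antidiag_loop:
  "(\<Sum>s<N. \<Sum>t<N. antidiag_cap N w s t * antidiag_cup N w s t) = (\<Sum>s<N. w (N - 1 - s) / w s)"
proof (intro sum.cong refl)
  fix s assume s: "s \<in> {..<N}"
  have "(\<Sum>t<N. antidiag_cap N w s t * antidiag_cup N w s t) = (\<Sum>t<N. if t = N - 1 - s then w t / w s else 0)"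
    using s by (intro sum.cong refl) (auto simp: antidiag_cup_def antidiag_cap_def)
  also have "\<dots> = w (N - 1 - s) / w s"
    using s by simp
  finally show "(\<Sum>t<N. antidiag_cap N w s t * antidiag_cup N w s t) = w (N - 1 - s) / w s" .
qed

lemma index_matunit:
  "a < N \<Longrightarrow> b < N \<Longrightarrow> matunit N i j $$ (a, b) = of_bool (a = i - 1 \<and> b = j - 1)"
  by (simp add: matunit_def)

lemma dim_matunit [simp]: "dim_row (matunit N i j) = N" "dim_col (matunit N i j) = N"
  by (simp_all add: matunit_def)

lemma index_kron_matunit_reflect:
  assumes r: "r < N * N" and c: "c < N * N" and i: "i \<in> {1..N}" and j: "j \<in> {1..N}"
  shows "kron (matunit N (prim N i) j) (matunit N i (prim N j)) $$ (r, c) =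
    of_bool (j = c div N + 1 \<and> i = r mod N + 1 \<and> r div N + r mod N = N - 1 \<and> c div N + c mod N = N - 1)"
proof -
  have rc: "r div N < N" "r mod N < N" "c div N < N" "c mod N < N"
    using div_mod_less_mult[OF r] div_mod_less_mult[OF c] by simp_all
  have "kron (matunit N (prim N i) j) (matunit N i (prim N j)) $$ (r, c) =
      of_bool ((r div N = N - i \<and> c div N = j - 1) \<and> (r mod N = i - 1 \<and> c mod N = N - j))"
    using r c rc by (simp add: index_matunit prim_def of_bool_conj)
  also have "(r div N = N - i \<and> c div N = j - 1) \<and> (r mod N = i - 1 \<and> c mod N = N - j) \<longleftrightarrow>
      j = c div N + 1 \<and> i = r mod N + 1 \<and> r div N + r mod N = N - 1 \<and> c div N + c mod N = N - 1"
    using i j rc by auto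
  finally show ?thesis .
qed

lemma P0_eq_dyad_mat:
  fixes eps :: int and N :: nat and q :: real
  assumes q: "q > 0"
  defines "w \<equiv> \<lambda>k. complex_of_real (rho_weight eps N q (k + 1))"
  shows "P0 eps N q = dyad_mat N (complex_of_real (dcoef eps N q)) (antidiag_cup N w) (antidiag_cap N w)"
    (is "_ = ?D")
proof (rule eq_matI)
  fix r c assume "r < dim_row ?D" "c < dim_col ?D"
  then have r: "r < N * N" and c: "c < N * N" by simp_all
  define a b where "a = r mod N + 1" and "b = c div N + 1"
  have rc: "r div N < N" "r mod N < N" "c div N < N" "c mod N < N"
    using div_mod_less_mult[OF r] div_mod_less_mult[OF c] by simp_all
  then have ab: "a \<in> {1..N}" "b \<in> {1..N}"
    unfolding a_def b_def atLeastAtMost_iff by linarith+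
  define K :: complex where "K = of_bool (r div N + r mod N = N - 1) * of_bool (c div N + c mod N = N - 1)"
  define coef where "coef i j = complex_of_real (q powr (rho eps N i - rho eps N j) * sgn_eps eps N i * sgn_eps eps N j)"
    for i j
  have "P0 eps N q $$ (r, c) = complex_of_real (dcoef eps N q) *
      (\<Sum>i\<in>{1..N}. \<Sum>j\<in>{1..N}. coef i j * kron (matunit N (prim N i) j) (matunit N i (prim N j)) $$ (r, c))"
    using r c by (simp only: P0_def index_mat(1) coef_def)
  also have "\<dots> = complex_of_real (dcoef eps N q) *
      (\<Sum>i\<in>{1..N}. \<Sum>j\<in>{1..N}. if j = b then if i = a then coef i j * K else 0 else 0)"
    using index_kron_matunit_reflect[OF r c]
    by (intro arg_cong[where f = "\<lambda>x. _ * x"] sum.cong refl) (simp add: a_def b_def K_def of_bool_conj)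
  also have "\<dots> = complex_of_real (dcoef eps N q) * (coef a b * K)"
    using ab by simp
  also have "\<dots> = ?D $$ (r, c)"
    using r c rc q
    by (simp add: antidiag_cup_def antidiag_cap_def w_def a_def b_def K_def coef_def rho_weight_divide[symmetric])
  finally show "P0 eps N q $$ (r, c) = ?D $$ (r, c)" .
qed (simp_all add: P0_def)

lemma P0_carrier: "P0 eps N q \<in> carrier_mat (N * N) (N * N)"
  by (simp add: P0_def)

locale P0_setting = orthosymplectic +
  fixes q :: real
  assumes N_pos: "N > 0" and q_pos: "q > 0"
    and loop_nonzero: "1 + real_of_int eps * qnum q (real N - real_of_int eps) \<noteq> 0"
begin

definition weight :: "nat \<Rightarrow> complex" where
  "weight = (\<lambda>k. complex_of_real (rho_weight eps N q (k + 1)))"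

lemmas P0_eq = P0_eq_dyad_mat[OF q_pos, of eps N, folded weight_def]

sublocale cup_cap N "antidiag_cup N weight" "antidiag_cap N weight"
  by (rule cup_cap_antidiag) (simp add: weight_def rho_weight_nonzero[OF q_pos])

lemma P0_idempotent: "P0 eps N q * P0 eps N q = P0 eps N q"
proof -
  have "(\<Sum>s<N. \<Sum>t<N. antidiag_cap N weight s t * antidiag_cup N weight s t) =
      complex_of_real (\<Sum>s<N. rho_weight eps N q (N - s) / rho_weight eps N q (s + 1))"
    unfolding antidiag_loop by (simp add: weight_def Suc_diff_Suc)
  also have "\<dots> = complex_of_real (1 + real_of_int eps * qnum q (real N - real_of_int eps))"
    by (simp only: sum_rho_weight_reflect_ratio[OF q_pos N_pos])
  finally have "complex_of_real (dcoef eps N q) * (\<Sum>s<N. \<Sum>t<N. antidiag_cap N weight s t * antidiag_cup N weight s t) =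
      complex_of_real (dcoef eps N q * (1 + real_of_int eps * qnum q (real N - real_of_int eps)))"
    by simp
  also have "\<dots> = 1"
    using loop_nonzero by (simp add: dcoef_def)
  finally show ?thesis
    unfolding P0_eq dyad_mat_mult_self by (intro eq_matI) simp_all
qed

lemma P0_yang_baxter:
  fixes x y z :: real
  assumes "y * (1 - (dcoef eps N q)\<^sup>2 * x * z) = x + z + x * z"
  shows "op12 N (1\<^sub>m (N * N) + complex_of_real x \<cdot>\<^sub>m P0 eps N q) * op23 N (1\<^sub>m (N * N) + complex_of_real y \<cdot>\<^sub>m P0 eps N q) *
      op12 N (1\<^sub>m (N * N) + complex_of_real z \<cdot>\<^sub>m P0 eps N q) =
    op23 N (1\<^sub>m (N * N) + complex_of_real z \<cdot>\<^sub>m P0 eps N q) * op12 N (1\<^sub>m (N * N) + complex_of_real y \<cdot>\<^sub>m P0 eps N q) *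
      op23 N (1\<^sub>m (N * N) + complex_of_real x \<cdot>\<^sub>m P0 eps N q)"
proof -
  note P = P0_carrier[of eps N q]
  have "op12 N (P0 eps N q) * op23 N (P0 eps N q) * op12 N (P0 eps N q) =
      (complex_of_real (dcoef eps N q))\<^sup>2 \<cdot>\<^sub>m op12 N (P0 eps N q)"
    "op23 N (P0 eps N q) * op12 N (P0 eps N q) * op23 N (P0 eps N q) =
      (complex_of_real (dcoef eps N q))\<^sup>2 \<cdot>\<^sub>m op23 N (P0 eps N q)"
    unfolding P0_eq by (rule temperley_lieb_12 temperley_lieb_23)+
  moreover have "complex_of_real y * (1 - (complex_of_real (dcoef eps N q))\<^sup>2 * complex_of_real x * complex_of_real z) =
      complex_of_real x + complex_of_real z + complex_of_real x * complex_of_real z"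
    using arg_cong[OF assms, of complex_of_real]
    by (simp only: of_real_mult of_real_add of_real_diff of_real_power of_real_1)
  ultimately show ?thesis
    unfolding op12_one_plus_smult[OF P] op23_one_plus_smult[OF P]
    by (intro baxterised_yang_baxter op12_carrier op23_carrier op12_idempotent op23_idempotent P P0_idempotent)
qed

lemma P0_unitarity:
  fixes x y :: real
  assumes "x + y + x * y = 0"
  shows "(1\<^sub>m (N * N) + complex_of_real x \<cdot>\<^sub>m P0 eps N q) * (1\<^sub>m (N * N) + complex_of_real y \<cdot>\<^sub>m P0 eps N q) = 1\<^sub>m (N * N)"
  using arg_cong[OF assms, of complex_of_real]
  by (intro baxterised_inverse[OF P0_carrier P0_idempotent]) (simp only: of_real_mult of_real_add of_real_0)

end

section \<open>The spectral function\<close>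

lemma wfun_inverse:
  assumes "\<eta> + \<theta> \<noteq> 0" "\<eta> - \<theta> \<noteq> 0"
  shows "wfun \<eta> \<theta> + wfun \<eta> (-\<theta>) + wfun \<eta> \<theta> * wfun \<eta> (-\<theta>) = 0"
proof -
  have "sinh (\<eta> + \<theta>) \<noteq> 0" "sinh (\<eta> - \<theta>) \<noteq> 0" using assms by simp_all
  then have "(1 + wfun \<eta> \<theta>) * (1 + wfun \<eta> (-\<theta>)) = 1"
    by (simp add: wfun_def)
  then show ?thesis by (simp add: algebra_simps)
qed

lemma sinh_times_exp: "sinh (x :: real) * (2 * exp y) = exp (y + x) - exp (y - x)"
  by (simp add: sinh_def exp_diff exp_add field_simps exp_minus)

lemma wfun_exp:
  assumes "\<eta> + \<theta> \<noteq> 0"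
  shows "wfun \<eta> \<theta> = (exp (2 * \<eta>) + 1) * (1 - exp (2 * \<theta>)) / (exp (2 * \<eta>) * exp (2 * \<theta>) - 1)"
proof -
  define X U where "X = exp (2 * \<eta>)" and "U = exp (2 * \<theta>)"
  have XU: "X * U = exp (2 * (\<eta> + \<theta>))" by (simp add: X_def U_def distrib_left exp_add)
  then have den: "X * U - 1 \<noteq> 0" using assms by simp
  have "sinh (\<eta> - \<theta>) * (2 * exp (\<eta> + \<theta>)) = X - U"
    unfolding sinh_times_exp X_def U_def by (simp add: algebra_simps)
  moreover have "sinh (\<eta> + \<theta>) * (2 * exp (\<eta> + \<theta>)) = X * U - 1"
    unfolding sinh_times_exp XU by (simp add: algebra_simps)
  ultimately have "sinh (\<eta> - \<theta>) / sinh (\<eta> + \<theta>) = (X - U) / (X * U - 1)"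
    by (metis mult_divide_mult_cancel_right exp_not_eq_zero mult_eq_0_iff zero_neq_numeral)
  then show ?thesis
    unfolding wfun_def X_def[symmetric] U_def[symmetric] using den by (simp add: field_simps)
qed

lemma moebius_addition:
  fixes X U V :: "'a :: field"
  assumes X: "X \<noteq> 1" "X + 1 \<noteq> 0" and U: "X * U \<noteq> 1" and V: "X * V \<noteq> 1" and UV: "X * (U * V) \<noteq> 1"
  defines "F \<equiv> \<lambda>t. (X + 1) * (1 - t) / (X * t - 1)"
  shows "1 - X / (X + 1)\<^sup>2 * F U * F V \<noteq> 0"
    and "F (U * V) * (1 - X / (X + 1)\<^sup>2 * F U * F V) = F U + F V + F U * F V"
proof -
  define a b c where "a = X * U - 1" and "b = X * V - 1" and "c = X * (U * V) - 1"
  have abc: "a \<noteq> 0" "b \<noteq> 0" "c \<noteq> 0" using U V UV by (auto simp: a_def b_def c_def)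
  have F: "F U = (X + 1) * (1 - U) / a" "F V = (X + 1) * (1 - V) / b" "F (U * V) = (X + 1) * (1 - U * V) / c"
    by (simp_all add: F_def a_def b_def c_def)
  have "F U * F V = (X + 1)\<^sup>2 * ((1 - U) * (1 - V)) / (a * b)"
    unfolding F by (simp add: power2_eq_square mult_ac)
  then have "X / (X + 1)\<^sup>2 * F U * F V = X * ((1 - U) * (1 - V)) / (a * b)"
    using X(2) by (simp add: mult.assoc)
  then have "1 - X / (X + 1)\<^sup>2 * F U * F V = (a * b - X * ((1 - U) * (1 - V))) / (a * b)"
    using abc by (simp add: field_simps)
  also have "a * b - X * ((1 - U) * (1 - V)) = (X - 1) * c"
    by (simp add: a_def b_def c_def algebra_simps)
  finally have one_minus: "1 - X / (X + 1)\<^sup>2 * F U * F V = (X - 1) * c / (a * b)" .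
  show "1 - X / (X + 1)\<^sup>2 * F U * F V \<noteq> 0"
    unfolding one_minus using abc X(1) by simp
  have "F U + F V + F U * F V =
      ((X + 1) * (1 - U) * b + (X + 1) * (1 - V) * a + (X + 1) * (1 - U) * ((X + 1) * (1 - V))) / (a * b)"
    unfolding F using abc by (simp add: field_simps)
  also have "(X + 1) * (1 - U) * b + (X + 1) * (1 - V) * a + (X + 1) * (1 - U) * ((X + 1) * (1 - V))
      = (X + 1) * (1 - U * V) * (X - 1)"
    by (simp add: a_def b_def algebra_simps)
  also have "\<dots> / (a * b) = F (U * V) * ((X - 1) * c / (a * b))"
    unfolding F using abc by simp
  finally show "F (U * V) * (1 - X / (X + 1)\<^sup>2 * F U * F V) = F U + F V + F U * F V"
    unfolding one_minus by (rule sym)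
qed

lemma tanh_eq_exp_double: "tanh (x :: real) = (exp (2 * x) - 1) / (exp (2 * x) + 1)"
proof -
  have "tanh x = (exp x * (exp x - exp (- x))) / (exp x * (exp x + exp (- x)))"
    unfolding tanh_altdef by simp
  moreover have "exp x * (exp x - exp (- x)) = exp (2 * x) - 1" "exp x * (exp x + exp (- x)) = exp (2 * x) + 1"
    by (simp_all add: algebra_simps mult_2 flip: exp_add)
  ultimately show ?thesis by simp
qed

lemma sq_eq_of_tanh_eq_sqrt:
  fixes d \<eta> :: real
  assumes "0 \<le> 1 - 4 * d\<^sup>2" and "tanh \<eta> = sqrt (1 - 4 * d\<^sup>2)"
  shows "d\<^sup>2 = exp (2 * \<eta>) / (exp (2 * \<eta>) + 1)\<^sup>2"
proof -
  define X where "X = exp (2 * \<eta>)"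
  have X: "X + 1 \<noteq> 0" using exp_gt_zero[of "2 * \<eta>"] unfolding X_def by linarith
  have "((X - 1) / (X + 1))\<^sup>2 = 1 - 4 * d\<^sup>2"
    using assms unfolding tanh_eq_exp_double X_def[symmetric] by simp
  then have "4 * d\<^sup>2 = ((X + 1)\<^sup>2 - (X - 1)\<^sup>2) / (X + 1)\<^sup>2"
    using X by (simp add: power_divide field_simps)
  also have "(X + 1)\<^sup>2 - (X - 1)\<^sup>2 = 4 * X"
    by (simp add: power2_eq_square algebra_simps)
  finally show ?thesis unfolding X_def by simp
qed

lemma wfun_addition:
  fixes d \<eta> \<theta> \<theta>' :: real
  assumes \<eta>: "\<eta> > 0" and d: "d\<^sup>2 = exp (2 * \<eta>) / (exp (2 * \<eta>) + 1)\<^sup>2"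
    and h: "\<eta> + \<theta> \<noteq> 0" "\<eta> + \<theta>' \<noteq> 0" "\<eta> + \<theta> + \<theta>' \<noteq> 0"
  shows "1 - d\<^sup>2 * wfun \<eta> \<theta> * wfun \<eta> \<theta>' \<noteq> 0"
    and "wfun \<eta> (\<theta> + \<theta>') * (1 - d\<^sup>2 * wfun \<eta> \<theta> * wfun \<eta> \<theta>') =
      wfun \<eta> \<theta> + wfun \<eta> \<theta>' + wfun \<eta> \<theta> * wfun \<eta> \<theta>'"
proof -
  define X U V where "X = exp (2 * \<eta>)" and "U = exp (2 * \<theta>)" and "V = exp (2 * \<theta>')"
  have exp_ne_1: "exp (2 * t) \<noteq> 1" if "t \<noteq> 0" for t :: real
    using that by simp
  have UV: "exp (2 * (\<theta> + \<theta>')) = U * V" by (simp add: U_def V_def distrib_left exp_add)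
  have X: "X \<noteq> 1" "X + 1 \<noteq> 0"
    using \<eta> exp_gt_zero[of "2 * \<eta>"] unfolding X_def by (simp, linarith)
  have "X * U \<noteq> 1" "X * V \<noteq> 1" "X * (U * V) \<noteq> 1"
    using exp_ne_1[OF h(1)] exp_ne_1[OF h(2)] exp_ne_1[OF h(3)]
    by (simp_all add: X_def U_def V_def UV[symmetric] distrib_left exp_add add.assoc)
  note moebius = moebius_addition[OF X this]
  have w: "wfun \<eta> \<theta> = (X + 1) * (1 - U) / (X * U - 1)" "wfun \<eta> \<theta>' = (X + 1) * (1 - V) / (X * V - 1)"
      "wfun \<eta> (\<theta> + \<theta>') = (X + 1) * (1 - U * V) / (X * (U * V) - 1)"
    unfolding X_def U_def V_def using h by (simp_all add: wfun_exp add.assoc distrib_left exp_add)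
  show "1 - d\<^sup>2 * wfun \<eta> \<theta> * wfun \<eta> \<theta>' \<noteq> 0"
    "wfun \<eta> (\<theta> + \<theta>') * (1 - d\<^sup>2 * wfun \<eta> \<theta> * wfun \<eta> \<theta>') = wfun \<eta> \<theta> + wfun \<eta> \<theta>' + wfun \<eta> \<theta> * wfun \<eta> \<theta>'"
    unfolding d w X_def[symmetric] using moebius by simp_all
qed

theorem mainTheorem7:
  fixes eps :: int and N :: nat and q \<eta> :: real
  assumes eps: "eps = 1 \<or> eps = -1"
    and N2: "N \<ge> 2"
    and Neven: "eps = -1 \<Longrightarrow> even N"
    and qpos: "q > 0"
    and dnz: "1 + real_of_int eps * qnum q (real N - real_of_int eps) \<noteq> 0"
    and d1: "0 < 1 - 4 * (dcoef eps N q)\<^sup>2" and d2: "1 - 4 * (dcoef eps N q)\<^sup>2 < 1"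
    and etapos: "\<eta> > 0"
    and eta: "tanh \<eta> = sqrt (1 - 4 * (dcoef eps N q)\<^sup>2)"
  shows "(\<forall>\<theta> \<theta>'. \<eta> + \<theta> \<noteq> 0 \<and> \<eta> + \<theta>' \<noteq> 0 \<and> \<eta> + \<theta> + \<theta>' \<noteq> 0 \<longrightarrow>
            op12 N (Rhat eps N q \<eta> \<theta>) * op23 N (Rhat eps N q \<eta> (\<theta> + \<theta>')) * op12 N (Rhat eps N q \<eta> \<theta>')
          = op23 N (Rhat eps N q \<eta> \<theta>') * op12 N (Rhat eps N q \<eta> (\<theta> + \<theta>')) * op23 N (Rhat eps N q \<eta> \<theta>))
       \<and> (\<forall>\<theta>. \<eta> + \<theta> \<noteq> 0 \<and> \<eta> - \<theta> \<noteq> 0 \<longrightarrow>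
            Rhat eps N q \<eta> \<theta> * Rhat eps N q \<eta> (-\<theta>) = 1\<^sub>m (N * N))
       \<and> (\<forall>\<theta> \<theta>'. \<eta> + \<theta> \<noteq> 0 \<and> \<eta> + \<theta>' \<noteq> 0 \<and> \<eta> + \<theta> + \<theta>' \<noteq> 0 \<longrightarrow>
            wfun \<eta> (\<theta> + \<theta>') = (wfun \<eta> \<theta> + wfun \<eta> \<theta>' + wfun \<eta> \<theta> * wfun \<eta> \<theta>')
               / (1 - (dcoef eps N q)\<^sup>2 * wfun \<eta> \<theta> * wfun \<eta> \<theta>'))"
proof -
  interpret P0_setting eps N q
    by unfold_locales (use eps Neven N2 qpos dnz in auto)
  have d: "(dcoef eps N q)\<^sup>2 = exp (2 * \<eta>) / (exp (2 * \<eta>) + 1)\<^sup>2"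
    using d1 eta by (intro sq_eq_of_tanh_eq_sqrt) simp_all
  show ?thesis
  proof (intro conjI allI impI)
    fix \<theta> \<theta>' assume "\<eta> + \<theta> \<noteq> 0 \<and> \<eta> + \<theta>' \<noteq> 0 \<and> \<eta> + \<theta> + \<theta>' \<noteq> 0"
    then have "1 - (dcoef eps N q)\<^sup>2 * wfun \<eta> \<theta> * wfun \<eta> \<theta>' \<noteq> 0"
      and rel: "wfun \<eta> (\<theta> + \<theta>') * (1 - (dcoef eps N q)\<^sup>2 * wfun \<eta> \<theta> * wfun \<eta> \<theta>') =
        wfun \<eta> \<theta> + wfun \<eta> \<theta>' + wfun \<eta> \<theta> * wfun \<eta> \<theta>'"
      using wfun_addition[OF etapos d, of \<theta> \<theta>'] by simp_all
    then show "wfun \<eta> (\<theta> + \<theta>') = (wfun \<eta> \<theta> + wfun \<eta> \<theta>' + wfun \<eta> \<theta> * wfun \<eta> \<theta>')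
        / (1 - (dcoef eps N q)\<^sup>2 * wfun \<eta> \<theta> * wfun \<eta> \<theta>')"
      by (simp add: eq_divide_eq)
    show "op12 N (Rhat eps N q \<eta> \<theta>) * op23 N (Rhat eps N q \<eta> (\<theta> + \<theta>')) * op12 N (Rhat eps N q \<eta> \<theta>')
        = op23 N (Rhat eps N q \<eta> \<theta>') * op12 N (Rhat eps N q \<eta> (\<theta> + \<theta>')) * op23 N (Rhat eps N q \<eta> \<theta>)"
      unfolding Rhat_def using rel by (rule P0_yang_baxter)
  next
    fix \<theta> assume "\<eta> + \<theta> \<noteq> 0 \<and> \<eta> - \<theta> \<noteq> 0"
    then show "Rhat eps N q \<eta> \<theta> * Rhat eps N q \<eta> (-\<theta>) = 1\<^sub>m (N * N)"
      unfolding Rhat_def by (intro P0_unitarity wfun_inverse) simp_all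
  qed
qed

end
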